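(* Let $\mu_0,\nu_0\in\mathcal P_c^*(\mathbb R^2)$ satisfy $\mathcal N_{\mathrm m}[\mu_0]\neq\mathcal N_{\mathrm m}[\nu_0]$, and consider the classes $$\mathbb F=\{(\mathbf A\cdot+\mathbf y)_\#\mu_0 : \mathbf A\in\mathrm{GL}(2),\ \mathbf y\in\mathbb R^2\},\qquad \mathbb G=\{(\mathbf A\cdot+\mathbf y)_\#\nu_0 : \mathbf A\in\mathrm{GL}(2),\ \mathbf y\in\mathbb R^2\}.$$ Then $\mathbb F\subset\mathcal P_c^*(\mathbb R^2)$ and $\mathbb G\subset\mathcal P_c^*(\mathbb R^2)$, and $\mathbb F$ and $\mathbb G$ are linearly separable in max-normalized R-CDT space, i.e. the sets $\mathcal N_{\mathrm m}[\mathbb F]$ and $\mathcal N_{\mathrm m}[\mathbb G]$ are linearly separable in $L^\infty_\rho(\mathbb R)$.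
   Context: Let $\mathbb S_1=\{x\in\mathbb R^2:\|x\|=1\}$. For $\theta\in\mathbb S_1$ let $S_\theta(x)=\langle x,\theta\rangle$ and, for a finite Borel measure $\mu$ on $\mathbb R^2$, let $\mathcal R_\theta[\mu]=(S_\theta)_\#\mu$ (pushforward measure on $\mathbb R$). Fix a reference Borel probability measure $\rho$ on $\mathbb R$ that has no atoms. For a probability measure $\nu$ on $\mathbb R$ with distribution function $F_\nu(t)=\nu((-\infty,t])$, set $F_\nu^{[-1]}(t)=\inf\{s\in\mathbb R: F_\nu(s)>t\}$ and define its cumulative distribution transform (CDT) $\hat\nu=F_\nu^{[-1]}\circ F_\rho$. Write $\widehat{\mathcal R}_\theta[\mu]$ for the CDT of $\mathcal R_\theta[\mu]$. For $g\in L^2_\rho(\mathbb R)$ let $\operatorname{mean}(g)=\int_{\mathbb R}g\,\mathrm d\rho$ and $\operatorname{std}(g)=\big(\int_{\mathbb R}|g-\operatorname{mean}(g)|^2\,\mathrm d\rho\big)^{1/2}$. Let $\mathcal P_c^*(\mathbb R^2)$ denote the set of Borel probability measures on $\mathbb R^2$ with compact support such that the affine hull of the support has dimension $>1$ (the support is not contained in a line). For $\mu\in\mathcal P_c^*(\mathbb R^2)$, $\theta\in\mathbb S_1$, $t\in\mathbb R$, the normalized R-CDT is $\mathcal N_\theta[\mu](t)=\big(\widehat{\mathcal R}_\theta[\mu](t)-\operatorname{mean}(\widehat{\mathcal R}_\theta[\mu])\big)/\operatorname{std}(\widehat{\mathcal R}_\theta[\mu])$, and the max-normalized R-CDT is $\mathcal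 N_{\mathrm m}[\mu](t)=\sup_{\theta\in\mathbb S_1}\mathcal N_\theta[\mu](t)$. Two subsets $A,B$ of a normed space $V$ are linearly separable if there exist a continuous linear functional $\ell$ on $V$ and $c\in\mathbb R$ with $\ell(a)>c$ for all $a\in A$ and $\ell(b)<c$ for all $b\in B$. *)

theory Defs
  imports "HOL-Probability.Probability"
begin

definition msupport :: "'a::metric_space measure \<Rightarrow> 'a set" where
  "msupport \<mu> = {x. \<forall>e>0. emeasure \<mu> (ball x e) > 0}"

definition Pc_star :: "(real^2) measure set" where
  "Pc_star = {\<mu>. prob_space \<mu> \<and> sets \<mu> = sets borel \<and>
                 compact (msupport \<mu>) \<and> aff_dim (msupport \<mu>) > 1}"

definition affine_orbit :: "(real^2) measure \<Rightarrow> (real^2) measure set" where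
  "affine_orbit \<mu> = {distr \<mu> borel (\<lambda>x. A *v x + y) | A y. invertible (A :: real^2^2)}"

definition radon :: "real^2 \<Rightarrow> (real^2) measure \<Rightarrow> real measure" where
  "radon \<theta> \<mu> = distr \<mu> borel (\<lambda>x. x \<bullet> \<theta>)"

definition cdf :: "real measure \<Rightarrow> real \<Rightarrow> real" where
  "cdf \<nu> t = measure \<nu> {..t}"

definition gen_inv :: "real measure \<Rightarrow> real \<Rightarrow> real" where
  "gen_inv \<nu> t = Inf {s. cdf \<nu> s > t}"

definition cdt :: "real measure \<Rightarrow> real measure \<Rightarrow> real \<Rightarrow> real" where
  "cdt \<rho> \<nu> = gen_inv \<nu> \<circ> cdf \<rho>"

definition rmean :: "real measure \<Rightarrow> (real \<Rightarrow> real) \<Rightarrow> real" where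
  "rmean \<rho> g = (\<integral>x. g x \<partial>\<rho>)"

definition rstd :: "real measure \<Rightarrow> (real \<Rightarrow> real) \<Rightarrow> real" where
  "rstd \<rho> g = sqrt (\<integral>x. \<bar>g x - rmean \<rho> g\<bar>^2 \<partial>\<rho>)"

definition NR :: "real measure \<Rightarrow> real^2 \<Rightarrow> (real^2) measure \<Rightarrow> real \<Rightarrow> real" where
  "NR \<rho> \<theta> \<mu> t = (cdt \<rho> (radon \<theta> \<mu>) t - rmean \<rho> (cdt \<rho> (radon \<theta> \<mu>)))
                     / rstd \<rho> (cdt \<rho> (radon \<theta> \<mu>))"

definition NRmax :: "real measure \<Rightarrow> (real^2) measure \<Rightarrow> real \<Rightarrow> real" where
  "NRmax \<rho> \<mu> t = (SUP \<theta>\<in>sphere 0 1. NR \<rho> \<theta> \<mu> t)"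

text \<open>Representatives of elements of \<open>L^\<infinity>_\<rho>(R)\<close>.\<close>
definition Linf :: "real measure \<Rightarrow> (real \<Rightarrow> real) set" where
  "Linf \<rho> = {f. f \<in> borel_measurable \<rho> \<and> (\<exists>C. AE x in \<rho>. \<bar>f x\<bar> \<le> C)}"

text \<open>Continuous linear functionals on \<open>L^\<infinity>_\<rho>\<close>, given on representatives:
linear, and bounded w.r.t. the essential sup norm (boundedness forces the functional
to agree on a.e.-equal representatives, so it is well defined on the quotient).\<close>
definition Linf_functional :: "real measure \<Rightarrow> ((real \<Rightarrow> real) \<Rightarrow> real) \<Rightarrow> bool" where
  "Linf_functional \<rho> L \<longleftrightarrow>
     (\<forall>f\<in>Linf \<rho>. \<forall>g\<in>Linf \<rho>. L (\<lambda>x. f x + g x) = L f + L g) \<and>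
     (\<forall>f\<in>Linf \<rho>. \<forall>c. L (\<lambda>x. c * f x) = c * L f) \<and>
     (\<exists>K. \<forall>f\<in>Linf \<rho>. \<forall>B. (AE x in \<rho>. \<bar>f x\<bar> \<le> B) \<longrightarrow> \<bar>L f\<bar> \<le> K * B)"

definition Linf_lin_separable ::
    "real measure \<Rightarrow> (real \<Rightarrow> real) set \<Rightarrow> (real \<Rightarrow> real) set \<Rightarrow> bool" where
  "Linf_lin_separable \<rho> A B \<longleftrightarrow> A \<subseteq> Linf \<rho> \<and> B \<subseteq> Linf \<rho> \<and>
     (\<exists>L c. Linf_functional \<rho> L \<and> (\<forall>a\<in>A. L a > c) \<and> (\<forall>b\<in>B. L b < c))"

end

(*
  The CDT is the quantile transform: it pushes the atomless reference measure rho forward to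
  the measure it is applied to.  For x |-> A x + y with A invertible, the projection of the
  pushed-forward measure in direction theta is the projection of the original one in direction
  phi(theta) = sgn (A^T theta), stretched by |A^T theta| > 0 and shifted by <y, theta>.  The CDT
  commutes with increasing affine maps of the line and the normalisation removes them, so
  N_theta[(A . + y)_# mu] = N_phi(theta)[mu]; as phi permutes the unit circle, N_m is constant
  on each orbit, rho-almost everywhere.

  N_m[mu] is essentially bounded: the CDTs of the projections of a compactly supported mu take
  values in a fixed interval, and their standard deviations, the square roots of the
  directional variances of mu, are bounded below on the circle because the support of mu does
  not lie on a line.  Finally, two functions f, g of L^oo that differ on a set of positive
  measure are separated by h |-> integral of h sgn (f - g) d rho, which is constant on
  a.e.-classes and takes the values integral of f sgn (f - g) > integral of g sgn (f - g).
*)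
theory Submission
  imports Defs
begin

section \<open>Generalised inverses of distribution functions\<close>

lemma Defs_cdf_eq: "Defs.cdf = Distribution_Functions.cdf"
  by (simp add: fun_eq_iff Defs.cdf_def Distribution_Functions.cdf_def)

locale bounded_real_distribution = real_distribution \<nu> for \<nu> :: "real measure" +
  fixes lo hi :: real
  assumes cdf_lo: "cdf \<nu> lo = 0" and cdf_hi: "cdf \<nu> hi = 1"
begin

lemma gen_inv_eq_Inf: "gen_inv \<nu> u = Inf {s. u < cdf \<nu> s}"
  by (simp add: gen_inv_def)

lemma hi_mem_superlevel: "u < 1 \<Longrightarrow> hi \<in> {s. u < cdf \<nu> s}"
  using cdf_hi by simp

lemma lo_le_superlevel:
  assumes "0 \<le> u" "u < cdf \<nu> s"
  shows "lo \<le> s"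
proof (rule ccontr)
  assume "\<not> lo \<le> s"
  then have "cdf \<nu> s \<le> cdf \<nu> lo"
    unfolding Defs_cdf_eq by (intro cdf_nondecreasing) simp
  with assms cdf_lo show False by simp
qed

lemma bdd_below_superlevel: "0 \<le> u \<Longrightarrow> bdd_below {s. u < cdf \<nu> s}"
  using lo_le_superlevel by (auto simp: bdd_below_def)

lemma gen_inv_bounds:
  assumes "0 \<le> u" "u < 1"
  shows "lo \<le> gen_inv \<nu> u" "gen_inv \<nu> u \<le> hi"
  unfolding gen_inv_eq_Inf
  using assms hi_mem_superlevel lo_le_superlevel
  by (auto intro!: cInf_greatest cInf_lower bdd_below_superlevel)

lemma gen_inv_mono:
  assumes "0 \<le> u" "u \<le> v" "v < 1"
  shows "gen_inv \<nu> u \<le> gen_inv \<nu> v"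
  unfolding gen_inv_eq_Inf
  using assms hi_mem_superlevel[of v]
  by (intro cInf_superset_mono bdd_below_superlevel) auto

lemma gen_inv_le_if_less_cdf:
  assumes "0 \<le> u" "u < cdf \<nu> x"
  shows "gen_inv \<nu> u \<le> x"
  unfolding gen_inv_eq_Inf using assms by (auto intro: cInf_lower bdd_below_superlevel)

lemma le_cdf_if_gen_inv_le:
  assumes "0 \<le> u" "u < 1" "gen_inv \<nu> u \<le> x"
  shows "u \<le> cdf \<nu> x"
proof (rule ccontr)
  assume "\<not> u \<le> cdf \<nu> x"
  then have "\<forall>\<^sub>F y in at_right x. cdf \<nu> y < u"
    using cdf_is_right_cont[of x] unfolding continuous_within Defs_cdf_eq
    by (intro order_tendstoD(2)) auto
  then obtain d where "x < d" and d: "\<And>y. x < y \<Longrightarrow> y < d \<Longrightarrow> cdf \<nu> y < u"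
    by (auto simp: eventually_at_right_field)
  have "(x + d) / 2 \<le> gen_inv \<nu> u"
    unfolding gen_inv_eq_Inf
  proof (rule cInf_greatest)
    show "{s. u < cdf \<nu> s} \<noteq> {}" using hi_mem_superlevel[OF assms(2)] by blast
    fix s assume s: "s \<in> {s. u < cdf \<nu> s}"
    show "(x + d) / 2 \<le> s"
    proof (rule ccontr)
      assume "\<not> (x + d) / 2 \<le> s"
      then have "cdf \<nu> s \<le> cdf \<nu> ((x + d) / 2)"
        unfolding Defs_cdf_eq by (intro cdf_nondecreasing) simp
      also have "\<dots> < u" using \<open>x < d\<close> by (intro d) auto
      finally show False using s by simp
    qed
  qed
  with assms(3) \<open>x < d\<close> show False by simp
qed

lemma gen_inv_distr_affine:
  assumes "0 \<le> u" "u < 1" "0 < a"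
  shows "gen_inv (distr \<nu> borel (\<lambda>s. a * s + b)) u = a * gen_inv \<nu> u + b"
proof -
  let ?S = "{s. u < cdf \<nu> s}"
  have cdf_distr: "cdf (distr \<nu> borel (\<lambda>s. a * s + b)) s = cdf \<nu> ((s - b) / a)" for s
  proof -
    have "(\<lambda>x. a * x + b) -` {..s} \<inter> space \<nu> = {..(s - b) / a}"
      using assms(3) by (auto simp: field_simps)
    then show ?thesis by (simp add: Defs.cdf_def measure_distr)
  qed
  have "{s. u < cdf (distr \<nu> borel (\<lambda>s. a * s + b)) s} = (\<lambda>v. a * v + b) ` ?S"
  proof (intro set_eqI iffI)
    fix s assume "s \<in> {s. u < cdf (distr \<nu> borel (\<lambda>s. a * s + b)) s}"
    then have "(s - b) / a \<in> ?S" by (simp add: cdf_distr)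
    moreover have "s = a * ((s - b) / a) + b" using assms(3) by simp
    ultimately show "s \<in> (\<lambda>v. a * v + b) ` ?S" by blast
  qed (use assms(3) in \<open>auto simp: cdf_distr\<close>)
  then have "gen_inv (distr \<nu> borel (\<lambda>s. a * s + b)) u = Inf ((\<lambda>v. a * v + b) ` ?S)"
    by (simp add: gen_inv_def)
  also have "\<dots> = a * Inf ?S + b"
    using assms hi_mem_superlevel[of u] bdd_below_superlevel[of u]
    by (intro continuous_at_Inf_mono[symmetric] monoI continuous_intros) auto
  finally show ?thesis by (simp add: gen_inv_eq_Inf)
qed

end

section \<open>The cumulative distribution transform\<close>

locale atomless_real_distribution = real_distribution \<rho> for \<rho> :: "real measure" +
  assumes measure_singleton: "measure \<rho> {t} = 0"
begin

lemma continuous_cdf: "continuous_on UNIV (cdf \<rho>)"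
  using isCont_cdf measure_singleton
  by (simp add: Defs_cdf_eq continuous_on_eq_continuous_at)

lemma mono_cdf: "mono (cdf \<rho>)"
  by (simp add: Defs_cdf_eq cdf_nondecreasing monoI)

lemma cdf_rho_le_1: "cdf \<rho> t \<le> 1"
  by (simp add: Defs_cdf_eq cdf_bounded_prob)

lemma cdf_rho_nonneg: "0 \<le> cdf \<rho> t"
  by (simp add: Defs_cdf_eq cdf_nonneg)

lemma borel_measurable_cdf[measurable]: "cdf \<rho> \<in> borel_measurable borel"
  by (rule borel_measurable_mono[OF mono_cdf])

text \<open>The two inequalities say that \<open>cdf \<rho>\<close> pushes \<open>\<rho>\<close> forward to the uniform
distribution on \<open>[0, 1]\<close>; this needs \<open>\<rho>\<close> to have no atoms.\<close>
lemma le_measure_cdf_less: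
  assumes "c \<le> 1"
  shows "c \<le> measure \<rho> {t. cdf \<rho> t < c}"
proof (cases "c \<le> 0 \<or> {t. cdf \<rho> t < c} = UNIV")
  case True
  then show ?thesis using assms prob_space by (auto intro: order_trans[OF _ measure_nonneg])
next
  case False
  let ?C = "{t. c \<le> cdf \<rho> t}"
  have "?C \<noteq> {}" using False by (force simp: not_le)
  have "closed ?C"
    using continuous_cdf by (intro closed_Collect_le) (auto intro: continuous_intros)
  have "\<forall>\<^sub>F x in at_bot. cdf \<rho> x < c"
    using cdf_lim_at_bot False unfolding Defs_cdf_eq by (intro order_tendstoD(2)) auto
  then obtain b where "\<And>x. x \<le> b \<Longrightarrow> cdf \<rho> x < c"
    by (auto simp: eventually_at_bot_linorder)
  then have "bdd_below ?C" by (force simp: bdd_below_def not_le intro: less_imp_le)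
  define T where "T = Inf ?C"
  have "T \<in> ?C" unfolding T_def by (rule closed_contains_Inf) fact+
  have "{..<T} \<subseteq> {t. cdf \<rho> t < c}"
  proof
    fix t assume "t \<in> {..<T}"
    then show "t \<in> {t. cdf \<rho> t < c}"
      using cInf_lower[OF _ \<open>bdd_below ?C\<close>, of t] by (auto simp: T_def not_le[symmetric])
  qed
  have "measure \<rho> {..T} = measure \<rho> {..<T} + measure \<rho> {T}"
    by (subst finite_measure_Union[symmetric]) (auto intro: arg_cong[where f = "measure \<rho>"])
  then have "c \<le> measure \<rho> {..<T}"
    using \<open>T \<in> ?C\<close> measure_singleton by (simp add: Defs.cdf_def)
  also have "\<dots> \<le> measure \<rho> {t. cdf \<rho> t < c}"
    using \<open>{..<T} \<subseteq> _\<close> by (intro finite_measure_mono) auto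
  finally show ?thesis .
qed

lemma measure_cdf_le_le:
  assumes "0 \<le> c"
  shows "measure \<rho> {t. cdf \<rho> t \<le> c} \<le> c"
proof (cases "1 \<le> c \<or> {t. cdf \<rho> t \<le> c} = {}")
  case True
  then show ?thesis using assms prob_le_1 by (auto intro: order_trans)
next
  case False
  let ?S = "{t. cdf \<rho> t \<le> c}"
  have "closed ?S"
    using continuous_cdf by (intro closed_Collect_le) (auto intro: continuous_intros)
  have "\<forall>\<^sub>F x in at_top. c < cdf \<rho> x"
    using cdf_lim_at_top_prob False unfolding Defs_cdf_eq by (intro order_tendstoD(1)) auto
  then obtain b where "\<And>x. b \<le> x \<Longrightarrow> c < cdf \<rho> x"
    by (auto simp: eventually_at_top_linorder)
  then have "bdd_above ?S" by (force simp: bdd_above_def not_le intro: less_imp_le)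
  define T where "T = Sup ?S"
  have "T \<in> ?S" unfolding T_def by (rule closed_contains_Sup) (use False \<open>bdd_above ?S\<close> \<open>closed ?S\<close> in auto)
  have "measure \<rho> ?S \<le> measure \<rho> {..T}"
    using cSup_upper[OF _ \<open>bdd_above ?S\<close>] by (intro finite_measure_mono) (auto simp: T_def)
  also have "\<dots> \<le> c" using \<open>T \<in> ?S\<close> by (simp add: Defs.cdf_def)
  finally show ?thesis .
qed

lemma AE_cdf_less_1: "AE t in \<rho>. cdf \<rho> t < 1"
proof -
  have "1 \<le> measure \<rho> {t. cdf \<rho> t < 1}" by (rule le_measure_cdf_less) simp
  then have "prob {t. cdf \<rho> t < 1} = 1" using prob_le_1 by (intro antisym) auto
  moreover have "{t. cdf \<rho> t < 1} \<in> events" by measurable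
  ultimately show ?thesis by (subst (asm) prob_eq_1) auto
qed

text \<open>Where \<open>cdf \<rho>\<close> reaches \<open>1\<close> the CDT takes the junk value \<open>gen_inv \<nu> 1 = Inf {}\<close>;
that set is \<open>\<rho>\<close>-null, which is why the pointwise statements below assume \<open>cdf \<rho> t < 1\<close>.\<close>
lemma cdt_eq_gen_inv_1: "1 \<le> cdf \<rho> t \<Longrightarrow> cdt \<rho> \<nu> t = gen_inv \<nu> 1"
  using cdf_rho_le_1[of t] by (simp add: cdt_def)

lemma borel_measurable_mono_on_cdf_less_1:
  fixes f :: "real \<Rightarrow> real"
  assumes "mono_on {t. cdf \<rho> t < 1} f" "\<And>s t. 1 \<le> cdf \<rho> s \<Longrightarrow> 1 \<le> cdf \<rho> t \<Longrightarrow> f s = f t"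
  shows "f \<in> borel_measurable borel"
proof (rule borel_measurable_piecewise_mono[of "{{t. cdf \<rho> t < 1}, {t. 1 \<le> cdf \<rho> t}}"])
  fix C assume "C \<in> {{t. cdf \<rho> t < 1}, {t. 1 \<le> cdf \<rho> t}}"
  moreover have "mono_on {t. 1 \<le> cdf \<rho> t} f"
    by (intro mono_onI) (metis assms(2) mem_Collect_eq order_refl)
  ultimately show "mono_on C f" using assms(1) by blast
qed auto

context
  fixes \<nu> lo hi assumes \<nu>: "bounded_real_distribution \<nu> lo hi"
begin

interpretation \<nu>: bounded_real_distribution \<nu> lo hi by (fact \<nu>)

lemma cdt_bounds: "cdf \<rho> t < 1 \<Longrightarrow> lo \<le> cdt \<rho> \<nu> t \<and> cdt \<rho> \<nu> t \<le> hi"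
  using \<nu>.gen_inv_bounds[OF cdf_rho_nonneg] by (simp add: cdt_def)

lemma mono_on_cdt: "mono_on {t. cdf \<rho> t < 1} (cdt \<rho> \<nu>)"
  using \<nu>.gen_inv_mono[OF cdf_rho_nonneg] mono_cdf
  by (auto intro!: mono_onI simp: cdt_def monoD)

lemma borel_measurable_cdt[measurable]: "cdt \<rho> \<nu> \<in> borel_measurable borel"
  by (rule borel_measurable_mono_on_cdf_less_1[OF mono_on_cdt]) (simp add: cdt_eq_gen_inv_1)

text \<open>Off the \<open>\<rho>\<close>-null set where \<open>cdf \<rho> = 1\<close>, the event \<open>cdt \<rho> \<nu> t \<le> x\<close> is squeezed between
\<open>cdf \<rho> t < c\<close> and \<open>cdf \<rho> t \<le> c\<close> with \<open>c = cdf \<nu> x\<close>, and both have probability \<open>c\<close>.\<close>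
lemma distr_cdt: "distr \<rho> borel (cdt \<rho> \<nu>) = \<nu>"
proof (rule cdf_unique)
  show "real_distribution (distr \<rho> borel (cdt \<rho> \<nu>))" by simp
  show "real_distribution \<nu>" by unfold_locales
  show "Distribution_Functions.cdf (distr \<rho> borel (cdt \<rho> \<nu>)) = Distribution_Functions.cdf \<nu>"
  proof
    fix x
    define c where "c = cdf \<nu> x"
    have "0 \<le> c" "c \<le> 1" using \<nu>.cdf_nonneg \<nu>.cdf_bounded_prob by (auto simp: c_def Defs_cdf_eq)
    let ?A = "{t. cdt \<rho> \<nu> t \<le> x}"
    have A_events: "?A \<in> events" by measurable
    have "Distribution_Functions.cdf (distr \<rho> borel (cdt \<rho> \<nu>)) x = prob ?A"
      by (simp add: cdf_def2 measure_distr vimage_def Int_def)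
    moreover have "c \<le> prob ?A"
    proof -
      have "c \<le> prob {t. cdf \<rho> t < c}" by (rule le_measure_cdf_less) fact
      also have "\<dots> \<le> prob ?A"
        using AE_cdf_less_1 \<nu>.gen_inv_le_if_less_cdf[OF cdf_rho_nonneg]
        by (intro finite_measure_mono_AE[OF _ A_events]) (auto simp: c_def cdt_def)
      finally show ?thesis .
    qed
    moreover have "prob ?A \<le> c"
    proof -
      have "prob ?A \<le> prob {t. cdf \<rho> t \<le> c}"
        using AE_cdf_less_1 \<nu>.le_cdf_if_gen_inv_le[OF cdf_rho_nonneg]
        by (intro finite_measure_mono_AE) (auto simp: c_def cdt_def)
      also have "\<dots> \<le> c" by (rule measure_cdf_le_le) fact
      finally show ?thesis .
    qed
    ultimately show "Distribution_Functions.cdf (distr \<rho> borel (cdt \<rho> \<nu>)) x = Distribution_Functions.cdf \<nu> x"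
      by (simp add: c_def Defs_cdf_eq)
  qed
qed

lemma integrable_cdt: "integrable \<rho> (cdt \<rho> \<nu>)"
proof (rule integrable_const_bound[of _ "max \<bar>lo\<bar> \<bar>hi\<bar>"])
  show "AE t in \<rho>. norm (cdt \<rho> \<nu> t) \<le> max \<bar>lo\<bar> \<bar>hi\<bar>"
    using AE_cdf_less_1 by eventually_elim (use cdt_bounds in fastforce)
qed measurable

lemma rmean_cdt: "rmean \<rho> (cdt \<rho> \<nu>) = (\<integral>y. y \<partial>\<nu>)"
proof -
  have "(\<integral>y. y \<partial>distr \<rho> borel (cdt \<rho> \<nu>)) = (\<integral>t. cdt \<rho> \<nu> t \<partial>\<rho>)"
    by (rule integral_distr) measurable
  then show ?thesis by (simp only: rmean_def distr_cdt)
qed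

lemma rstd_cdt: "rstd \<rho> (cdt \<rho> \<nu>) = sqrt (\<integral>y. (y - (\<integral>y. y \<partial>\<nu>))\<^sup>2 \<partial>\<nu>)"
proof -
  let ?m = "\<integral>y. y \<partial>\<nu>"
  have "(\<integral>y. (y - ?m)\<^sup>2 \<partial>distr \<rho> borel (cdt \<rho> \<nu>)) = (\<integral>t. (cdt \<rho> \<nu> t - ?m)\<^sup>2 \<partial>\<rho>)"
    by (rule integral_distr) measurable
  then show ?thesis by (simp only: rstd_def rmean_cdt distr_cdt power2_abs)
qed

lemma rmean_cdt_bounds: "lo \<le> rmean \<rho> (cdt \<rho> \<nu>) \<and> rmean \<rho> (cdt \<rho> \<nu>) \<le> hi"
proof -
  have "AE t in \<rho>. lo \<le> cdt \<rho> \<nu> t \<and> cdt \<rho> \<nu> t \<le> hi"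
    using AE_cdf_less_1 by eventually_elim (rule cdt_bounds)
  then show ?thesis
    unfolding rmean_def by (intro conjI integral_ge_const integral_le_const integrable_cdt) auto
qed

lemma cdt_distr_affine:
  assumes "cdf \<rho> t < 1" "0 < a"
  shows "cdt \<rho> (distr \<nu> borel (\<lambda>s. a * s + b)) t = a * cdt \<rho> \<nu> t + b"
  using \<nu>.gen_inv_distr_affine[OF cdf_rho_nonneg assms] by (simp add: cdt_def)

end

end

lemma normalized_affine_eq:
  assumes "prob_space \<rho>" "integrable \<rho> g" "g' \<in> borel_measurable \<rho>" "0 < a"
    and "AE s in \<rho>. g' s = a * g s + b" "g' t = a * g t + b"
  shows "(g' t - rmean \<rho> g') / rstd \<rho> g' = (g t - rmean \<rho> g) / rstd \<rho> g"
proof -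
  interpret prob_space \<rho> by fact
  have "rmean \<rho> g' = (\<integral>s. a * g s + b \<partial>\<rho>)"
    unfolding rmean_def using assms(2,3,5) by (intro integral_cong_AE) simp_all
  also have "\<dots> = a * rmean \<rho> g + b"
    using assms(2) prob_space by (simp add: rmean_def)
  finally have mean: "rmean \<rho> g' = a * rmean \<rho> g + b" .
  have "AE s in \<rho>. \<bar>g' s - rmean \<rho> g'\<bar>\<^sup>2 = a\<^sup>2 * \<bar>g s - rmean \<rho> g\<bar>\<^sup>2"
    using assms(5) by eventually_elim (simp add: mean power2_eq_square algebra_simps)
  then have "(\<integral>s. \<bar>g' s - rmean \<rho> g'\<bar>\<^sup>2 \<partial>\<rho>) = (\<integral>s. a\<^sup>2 * \<bar>g s - rmean \<rho> g\<bar>\<^sup>2 \<partial>\<rho>)"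
    using assms(2,3) by (intro integral_cong_AE) auto
  then have "rstd \<rho> g' = a * rstd \<rho> g"
    using assms(4) by (simp add: rstd_def real_sqrt_mult)
  then show ?thesis
    using assms(4,6) mean by (simp add: right_diff_distrib[symmetric])
qed

section \<open>Supports of measures\<close>

lemma msupport_iff_open:
  fixes \<mu> :: "'a::metric_space measure"
  assumes "sets \<mu> = sets borel"
  shows "x \<in> msupport \<mu> \<longleftrightarrow> (\<forall>U. open U \<longrightarrow> x \<in> U \<longrightarrow> 0 < emeasure \<mu> U)"
proof
  assume x: "x \<in> msupport \<mu>"
  show "\<forall>U. open U \<longrightarrow> x \<in> U \<longrightarrow> 0 < emeasure \<mu> U"
  proof (intro allI impI)
    fix U :: "'a set" assume "open U" "x \<in> U"
    then obtain e where "0 < e" "ball x e \<subseteq> U" by (meson open_contains_ball)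
    then have "0 < emeasure \<mu> (ball x e)" using x by (simp add: msupport_def)
    also have "\<dots> \<le> emeasure \<mu> U"
      using \<open>ball x e \<subseteq> U\<close> \<open>open U\<close> by (intro emeasure_mono) (auto simp: assms)
    finally show "0 < emeasure \<mu> U" .
  qed
qed (simp add: msupport_def)

lemma msupport_compl_null:
  fixes \<mu> :: "'a::{metric_space, second_countable_topology} measure"
  assumes "sets \<mu> = sets borel"
  shows "- msupport \<mu> \<in> null_sets \<mu>"
proof -
  define \<U> where "\<U> = {U. open U \<and> emeasure \<mu> U = 0}"
  have "\<Union>\<U> = - msupport \<mu>"
    by (auto simp: \<U>_def msupport_iff_open[OF assms]) force
  obtain \<U>' where "\<U>' \<subseteq> \<U>" "countable \<U>'" "\<Union>\<U>' = \<Union>\<U>"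
    by (rule Lindelof[of \<U>]) (auto simp: \<U>_def)
  have "(\<Union>U\<in>\<U>'. U) \<in> null_sets \<mu>"
    using \<open>\<U>' \<subseteq> \<U>\<close> by (intro null_sets_UN' \<open>countable \<U>'\<close>) (auto simp: \<U>_def assms null_sets_def)
  with \<open>\<Union>\<U>' = \<Union>\<U>\<close> \<open>\<Union>\<U> = - msupport \<mu>\<close> show ?thesis by simp
qed

lemma AE_in_msupport:
  fixes \<mu> :: "'a::{metric_space, second_countable_topology} measure"
  assumes "sets \<mu> = sets borel"
  shows "AE x in \<mu>. x \<in> msupport \<mu>"
  using AE_not_in[OF msupport_compl_null[OF assms]] by simp

lemma msupport_subset_closed:
  fixes \<mu> :: "'a::metric_space measure"
  assumes "sets \<mu> = sets borel" "closed C" "AE x in \<mu>. x \<in> C"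
  shows "msupport \<mu> \<subseteq> C"
proof
  fix x assume "x \<in> msupport \<mu>"
  show "x \<in> C"
  proof (rule ccontr)
    assume "x \<notin> C"
    have "- C \<in> sets \<mu>" using assms(1,2) by (simp add: borel_open open_Compl)
    then have "- C \<in> null_sets \<mu>" using AE_iff_null_sets[of "- C" \<mu>] assms(3) by simp
    then have "emeasure \<mu> (- C) = 0" by auto
    moreover have "0 < emeasure \<mu> (- C)"
      using \<open>x \<in> msupport \<mu>\<close> \<open>x \<notin> C\<close> \<open>closed C\<close> by (simp add: msupport_iff_open[OF assms(1)] open_Compl)
    ultimately show False by simp
  qed
qed

lemma msupport_distr_homeomorphism:
  fixes \<mu> :: "'a::metric_space measure" and f :: "'a \<Rightarrow> 'b::metric_space"
  assumes "sets \<mu> = sets borel" and hom: "homeomorphism UNIV UNIV f g"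
  shows "msupport (distr \<mu> borel f) = f ` msupport \<mu>"
proof -
  have f_meas: "f \<in> measurable \<mu> borel"
    using homeomorphism_cont1[OF hom] by (simp add: measurable_cong_sets[OF assms(1)] borel_measurable_continuous_onI)
  have "open (f -` U)" if "open U" for U
    using open_vimage[OF that homeomorphism_cont1[OF hom]] .
  moreover have "open (g -` V)" if "open V" for V
    using open_vimage[OF that homeomorphism_cont2[OF hom]] .
  moreover have "f -` (g -` V) = V" "g -` (f -` U) = U" for U V
    using homeomorphism_apply1[OF hom] homeomorphism_apply2[OF hom] by auto
  ultimately have "y \<in> msupport (distr \<mu> borel f) \<longleftrightarrow> g y \<in> msupport \<mu>" for y
    using homeomorphism_apply2[OF hom, of y] sets_eq_imp_space_eq[OF assms(1)]
    unfolding msupport_iff_open[OF assms(1)] msupport_iff_open[of "distr \<mu> borel f", simplified]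
    by (auto simp: emeasure_distr[OF f_meas]) (metis vimageI2)+
  then show ?thesis
    using homeomorphism_apply1[OF hom] homeomorphism_apply2[OF hom] by auto (metis image_eqI)
qed

section \<open>Projections of compactly supported measures on the plane\<close>

lemma Pc_starD:
  assumes "\<mu> \<in> Pc_star"
  shows "prob_space \<mu>" "sets \<mu> = sets borel" "compact (msupport \<mu>)" "1 < aff_dim (msupport \<mu>)"
  using assms by (auto simp: Pc_star_def)

lemma integrable_compact_msupport:
  fixes f :: "'a::{metric_space, second_countable_topology} \<Rightarrow> real"
  assumes "finite_measure \<mu>" "sets \<mu> = sets borel" "compact (msupport \<mu>)" "continuous_on UNIV f"
  shows "integrable \<mu> f"
proof -
  have "bounded (f ` msupport \<mu>)"
    using assms(3) continuous_on_subset[OF assms(4)]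
    by (intro compact_imp_bounded compact_continuous_image) auto
  then obtain B where B: "\<And>x. x \<in> msupport \<mu> \<Longrightarrow> norm (f x) \<le> B"
    unfolding bounded_iff by blast
  have "AE x in \<mu>. norm (f x) \<le> B"
    using AE_in_msupport[OF assms(2)] by eventually_elim (rule B)
  moreover have "f \<in> borel_measurable \<mu>"
    unfolding measurable_cong_sets[OF assms(2) refl] by (rule borel_measurable_continuous_onI[OF assms(4)])
  ultimately show ?thesis
    by (rule finite_measure.integrable_const_bound[OF assms(1)])
qed

lemma integrable_Pc_star:
  fixes f :: "real^2 \<Rightarrow> real"
  assumes "\<mu> \<in> Pc_star" "continuous_on UNIV f"
  shows "integrable \<mu> f"
  using Pc_starD[OF assms(1)] assms(2)
  by (intro integrable_compact_msupport) (auto simp: prob_space_def)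

text \<open>The lower end is \<open>-R - 1\<close> rather than \<open>-R\<close> because \<open>cdf\<close> counts the mass at \<open>-R\<close>.\<close>
lemma radon_bounded_real_distribution:
  fixes \<mu> :: "(real^2) measure"
  assumes "prob_space \<mu>" "sets \<mu> = sets borel" "msupport \<mu> \<subseteq> cball 0 R" "norm \<theta> = 1"
  shows "bounded_real_distribution (radon \<theta> \<mu>) (- R - 1) R"
proof -
  interpret prob_space \<mu> by fact
  have meas: "(\<lambda>x. x \<bullet> \<theta>) \<in> borel_measurable \<mu>"
    unfolding measurable_cong_sets[OF assms(2) refl] by simp
  have cdf_radon: "cdf (radon \<theta> \<mu>) s = prob {x. x \<bullet> \<theta> \<le> s}" for s
    using meas sets_eq_imp_space_eq[OF assms(2)]
    by (simp add: Defs.cdf_def radon_def measure_distr vimage_def Int_def)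
  have "AE x in \<mu>. \<bar>x \<bullet> \<theta>\<bar> \<le> R"
    using AE_in_msupport[OF assms(2)]
  proof eventually_elim
    fix x assume "x \<in> msupport \<mu>"
    then show "\<bar>x \<bullet> \<theta>\<bar> \<le> R"
      using assms(3,4) Cauchy_Schwarz_ineq2[of x \<theta>] by auto
  qed
  then have "AE x in \<mu>. x \<in> {x. x \<bullet> \<theta> \<le> R}" "AE x in \<mu>. x \<notin> {x. x \<bullet> \<theta> \<le> - R - 1}"
    by (auto elim: AE_mp)
  moreover have "{x. x \<bullet> \<theta> \<le> r} \<in> events" for r
    using assms(2) by simp
  ultimately have "cdf (radon \<theta> \<mu>) R = 1" "cdf (radon \<theta> \<mu>) (- R - 1) = 0"
    unfolding cdf_radon by (simp_all add: prob_eq_1 prob_eq_0)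
  moreover have "real_distribution (radon \<theta> \<mu>)"
    unfolding radon_def using meas by (rule real_distribution_distr)
  ultimately show ?thesis
    by (simp add: bounded_real_distribution_def bounded_real_distribution_axioms_def)
qed

lemma Pc_star_radon_bounded:
  assumes "\<mu> \<in> Pc_star"
  obtains R where "0 < R"
    "\<And>\<theta>. \<theta> \<in> sphere 0 1 \<Longrightarrow> bounded_real_distribution (radon \<theta> \<mu>) (- R - 1) R"
proof -
  obtain R where "0 < R" "msupport \<mu> \<subseteq> ball 0 R"
    using bounded_subset_ballD[OF compact_imp_bounded[OF Pc_starD(3)[OF assms]]] by blast
  moreover have "bounded_real_distribution (radon \<theta> \<mu>) (- R - 1) R" if "\<theta> \<in> sphere 0 1" for \<theta>
    using Pc_starD[OF assms] \<open>msupport \<mu> \<subseteq> ball 0 R\<close> ball_subset_cball that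
    by (intro radon_bounded_real_distribution) auto
  ultimately show ?thesis using that by blast
qed

definition dir_variance :: "(real^2) measure \<Rightarrow> real^2 \<Rightarrow> real" where
  "dir_variance \<mu> \<theta> = (\<integral>x. (x \<bullet> \<theta> - (\<integral>z. z \<bullet> \<theta> \<partial>\<mu>))\<^sup>2 \<partial>\<mu>)"

lemma inner_real2: "(x::real^2) \<bullet> \<theta> = x$1 * \<theta>$1 + x$2 * \<theta>$2"
  by (simp add: inner_vec_def sum_2)

lemma dir_variance_pos:
  assumes "\<mu> \<in> Pc_star" "\<theta> \<noteq> 0"
  shows "0 < dir_variance \<mu> \<theta>"
proof (rule ccontr)
  assume "\<not> 0 < dir_variance \<mu> \<theta>"
  interpret prob_space \<mu> using Pc_starD[OF assms(1)] by simp
  define m where "m = (\<integral>z. z \<bullet> \<theta> \<partial>\<mu>)"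
  have "integrable \<mu> (\<lambda>x. (x \<bullet> \<theta> - m)\<^sup>2)"
    by (intro integrable_Pc_star[OF assms(1)] continuous_intros)
  moreover have "0 \<le> dir_variance \<mu> \<theta>"
    unfolding dir_variance_def by (rule variance_positive)
  then have "dir_variance \<mu> \<theta> = 0"
    using \<open>\<not> 0 < dir_variance \<mu> \<theta>\<close> by simp
  ultimately have "AE x in \<mu>. (x \<bullet> \<theta> - m)\<^sup>2 = 0"
    by (simp add: integral_nonneg_eq_0_iff_AE dir_variance_def m_def)
  then have "AE x in \<mu>. x \<in> {x. \<theta> \<bullet> x = m}"
    by eventually_elim (simp add: inner_commute)
  then have "msupport \<mu> \<subseteq> {x. \<theta> \<bullet> x = m}"
    using Pc_starD(2)[OF assms(1)] by (intro msupport_subset_closed closed_hyperplane)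
  then have "aff_dim (msupport \<mu>) \<le> aff_dim {x. \<theta> \<bullet> x = m}"
    by (rule aff_dim_subset)
  then show False
    using aff_dim_hyperplane[OF assms(2)] Pc_starD(4)[OF assms(1)] by simp
qed

lemma dir_variance_quadratic_form:
  assumes "\<mu> \<in> Pc_star"
  obtains a b c where
    "\<And>\<theta>. dir_variance \<mu> \<theta> = (\<theta>$1)\<^sup>2 * a + 2 * (\<theta>$1 * \<theta>$2) * b + (\<theta>$2)\<^sup>2 * c"
proof -
  define m1 where "m1 = (\<integral>x. x$1 \<partial>\<mu>)"
  define m2 where "m2 = (\<integral>x. x$2 \<partial>\<mu>)"
  have int: "integrable \<mu> f" if "continuous_on UNIV f" for f :: "real^2 \<Rightarrow> real"
    by (rule integrable_Pc_star[OF assms that])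
  interpret prob_space \<mu> using Pc_starD[OF assms] by simp
  have "dir_variance \<mu> \<theta> = (\<theta>$1)\<^sup>2 * (\<integral>x. (x$1 - m1)\<^sup>2 \<partial>\<mu>)
      + 2 * (\<theta>$1 * \<theta>$2) * (\<integral>x. (x$1 - m1) * (x$2 - m2) \<partial>\<mu>)
      + (\<theta>$2)\<^sup>2 * (\<integral>x. (x$2 - m2)\<^sup>2 \<partial>\<mu>)" for \<theta>
  proof -
    have "(\<integral>z. z \<bullet> \<theta> \<partial>\<mu>) = m1 * \<theta>$1 + m2 * \<theta>$2"
      unfolding inner_real2 m1_def m2_def
      using int[of "\<lambda>x. x$1"] int[of "\<lambda>x. x$2"] by (simp add: continuous_on_component)
    moreover have "(x \<bullet> \<theta> - (m1 * \<theta>$1 + m2 * \<theta>$2))\<^sup>2 = (\<theta>$1)\<^sup>2 * (x$1 - m1)\<^sup>2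
        + 2 * (\<theta>$1 * \<theta>$2) * ((x$1 - m1) * (x$2 - m2)) + (\<theta>$2)\<^sup>2 * (x$2 - m2)\<^sup>2" for x :: "real^2"
      unfolding inner_real2 by (simp add: power2_eq_square algebra_simps)
    ultimately show ?thesis
      unfolding dir_variance_def
      by (simp add: int continuous_intros continuous_on_component)
  qed
  then show ?thesis by (rule that)
qed

lemma dir_variance_lower_bound:
  assumes "\<mu> \<in> Pc_star"
  obtains \<delta> where "0 < \<delta>" "\<And>\<theta>. \<theta> \<in> sphere 0 1 \<Longrightarrow> \<delta> \<le> dir_variance \<mu> \<theta>"
proof -
  obtain a b c where Q:
    "\<And>\<theta>. dir_variance \<mu> \<theta> = (\<theta>$1)\<^sup>2 * a + 2 * (\<theta>$1 * \<theta>$2) * b + (\<theta>$2)\<^sup>2 * c"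
    using dir_variance_quadratic_form[OF assms] by blast
  have "continuous_on (sphere 0 1) (dir_variance \<mu>)"
    unfolding Q by (intro continuous_intros continuous_on_component)
  moreover have "sphere (0::real^2) 1 \<noteq> {}" by simp
  ultimately obtain \<theta>0 where "\<theta>0 \<in> sphere (0::real^2) 1"
    and "\<And>\<theta>. \<theta> \<in> sphere 0 1 \<Longrightarrow> dir_variance \<mu> \<theta>0 \<le> dir_variance \<mu> \<theta>"
    using continuous_attains_inf[OF compact_sphere] by blast
  moreover have "0 < dir_variance \<mu> \<theta>0"
    using \<open>\<theta>0 \<in> sphere 0 1\<close> by (intro dir_variance_pos[OF assms]) auto
  ultimately show ?thesis using that by blast
qed

lemma radon_moments:
  assumes "sets \<mu> = sets borel"
  shows "(\<integral>y. y \<partial>radon \<theta> \<mu>) = (\<integral>x. x \<bullet> \<theta> \<partial>\<mu>)"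
    and "(\<integral>y. (y - m)\<^sup>2 \<partial>radon \<theta> \<mu>) = (\<integral>x. (x \<bullet> \<theta> - m)\<^sup>2 \<partial>\<mu>)"
proof -
  have meas: "(\<lambda>x. x \<bullet> \<theta>) \<in> borel_measurable \<mu>"
    unfolding measurable_cong_sets[OF assms refl] by simp
  show "(\<integral>y. y \<partial>radon \<theta> \<mu>) = (\<integral>x. x \<bullet> \<theta> \<partial>\<mu>)"
    unfolding radon_def by (rule integral_distr[OF meas]) simp
  show "(\<integral>y. (y - m)\<^sup>2 \<partial>radon \<theta> \<mu>) = (\<integral>x. (x \<bullet> \<theta> - m)\<^sup>2 \<partial>\<mu>)"
    unfolding radon_def by (rule integral_distr[OF meas]) simp
qed

context atomless_real_distribution
begin

lemma rstd_cdt_radon: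
  assumes "\<mu> \<in> Pc_star" "\<theta> \<in> sphere 0 1"
  shows "rstd \<rho> (cdt \<rho> (radon \<theta> \<mu>)) = sqrt (dir_variance \<mu> \<theta>)"
proof -
  obtain R where R: "\<And>\<theta>. \<theta> \<in> sphere 0 1 \<Longrightarrow> bounded_real_distribution (radon \<theta> \<mu>) (- R - 1) R"
    using Pc_star_radon_bounded[OF assms(1)] by blast
  show ?thesis
    using rstd_cdt[OF R[OF assms(2)]] radon_moments[OF Pc_starD(2)[OF assms(1)]]
    by (simp add: dir_variance_def)
qed

lemma NR_bounded:
  assumes "\<mu> \<in> Pc_star"
  obtains B where "\<And>\<theta> t. \<theta> \<in> sphere 0 1 \<Longrightarrow> cdf \<rho> t < 1 \<Longrightarrow> \<bar>NR \<rho> \<theta> \<mu> t\<bar> \<le> B"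
proof -
  obtain R where R: "0 < R"
    "\<And>\<theta>. \<theta> \<in> sphere 0 1 \<Longrightarrow> bounded_real_distribution (radon \<theta> \<mu>) (- R - 1) R"
    using Pc_star_radon_bounded[OF assms] by blast
  obtain \<delta> where \<delta>: "0 < \<delta>" "\<And>\<theta>. \<theta> \<in> sphere 0 1 \<Longrightarrow> \<delta> \<le> dir_variance \<mu> \<theta>"
    using dir_variance_lower_bound[OF assms] by blast
  have "\<bar>NR \<rho> \<theta> \<mu> t\<bar> \<le> (2 * R + 1) / sqrt \<delta>" if "\<theta> \<in> sphere 0 1" "cdf \<rho> t < 1" for \<theta> t
  proof -
    let ?g = "cdt \<rho> (radon \<theta> \<mu>)"
    note \<nu> = R(2)[OF that(1)]
    have "sqrt \<delta> \<le> rstd \<rho> ?g"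
      using rstd_cdt_radon[OF assms that(1)] \<delta>(2)[OF that(1)] by simp
    moreover have "\<bar>?g t - rmean \<rho> ?g\<bar> \<le> 2 * R + 1"
      using cdt_bounds[OF \<nu> that(2)] rmean_cdt_bounds[OF \<nu>] by (simp add: abs_le_iff)
    ultimately show ?thesis
      unfolding NR_def using \<delta>(1) R(1)
      by (simp add: abs_div frac_le)
  qed
  then show ?thesis by (rule that)
qed

lemma mono_on_NR:
  assumes "\<mu> \<in> Pc_star" "\<theta> \<in> sphere 0 1"
  shows "mono_on {t. cdf \<rho> t < 1} (NR \<rho> \<theta> \<mu>)"
proof -
  obtain R where "\<And>\<theta>. \<theta> \<in> sphere 0 1 \<Longrightarrow> bounded_real_distribution (radon \<theta> \<mu>) (- R - 1) R"
    using Pc_star_radon_bounded[OF assms(1)] by blast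
  note \<nu> = this[OF assms(2)]
  have "\<theta> \<noteq> 0" using assms(2) by auto
  then have "0 < rstd \<rho> (cdt \<rho> (radon \<theta> \<mu>))"
    using rstd_cdt_radon[OF assms] dir_variance_pos[OF assms(1)] by simp
  then show ?thesis
    using mono_on_cdt[OF \<nu>] unfolding NR_def
    by (auto intro!: mono_onI divide_right_mono dest: mono_onD)
qed

lemma NRmax_eq_if_cdf_eq_1:
  "1 \<le> cdf \<rho> s \<Longrightarrow> 1 \<le> cdf \<rho> t \<Longrightarrow> NRmax \<rho> \<mu> s = NRmax \<rho> \<mu> t"
  by (simp add: NRmax_def NR_def cdt_eq_gen_inv_1)

lemma NR_le_NRmax:
  assumes "\<mu> \<in> Pc_star" "\<theta> \<in> sphere 0 1" "cdf \<rho> t < 1"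
  shows "NR \<rho> \<theta> \<mu> t \<le> NRmax \<rho> \<mu> t"
proof -
  obtain B where B: "\<And>\<theta> t. \<theta> \<in> sphere 0 1 \<Longrightarrow> cdf \<rho> t < 1 \<Longrightarrow> \<bar>NR \<rho> \<theta> \<mu> t\<bar> \<le> B"
    using NR_bounded[OF assms(1)] by blast
  show ?thesis
    unfolding NRmax_def using B[OF _ assms(3)] assms(2)
    by (intro cSUP_upper bdd_aboveI2[where M = B]) (auto simp: abs_le_iff)
qed

lemma NRmax_bounded:
  assumes "\<mu> \<in> Pc_star"
  obtains B where "\<And>t. cdf \<rho> t < 1 \<Longrightarrow> \<bar>NRmax \<rho> \<mu> t\<bar> \<le> B"
proof -
  obtain B where B: "\<And>\<theta> t. \<theta> \<in> sphere 0 1 \<Longrightarrow> cdf \<rho> t < 1 \<Longrightarrow> \<bar>NR \<rho> \<theta> \<mu> t\<bar> \<le> B"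
    using NR_bounded[OF assms] by blast
  have "\<bar>NRmax \<rho> \<mu> t\<bar> \<le> B" if "cdf \<rho> t < 1" for t
  proof -
    have e1: "axis 1 1 \<in> sphere (0::real^2) 1" by simp
    have "- B \<le> NRmax \<rho> \<mu> t"
      using B[OF e1 that] NR_le_NRmax[OF assms e1 that] by (simp add: abs_le_iff)
    moreover have "NRmax \<rho> \<mu> t \<le> B"
      unfolding NRmax_def using B[OF _ that] by (intro cSUP_least) (auto simp: abs_le_iff)
    ultimately show ?thesis by simp
  qed
  then show ?thesis by (rule that)
qed

lemma mono_on_NRmax:
  assumes "\<mu> \<in> Pc_star"
  shows "mono_on {t. cdf \<rho> t < 1} (NRmax \<rho> \<mu>)"
proof (rule mono_onI)
  fix s t assume st: "s \<in> {t. cdf \<rho> t < 1}" "t \<in> {t. cdf \<rho> t < 1}" "s \<le> t"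
  have "NR \<rho> \<theta> \<mu> s \<le> NRmax \<rho> \<mu> t" if "\<theta> \<in> sphere 0 1" for \<theta>
    using mono_onD[OF mono_on_NR[OF assms that] st] NR_le_NRmax[OF assms that] st(2)
    by (simp add: order_trans)
  then show "NRmax \<rho> \<mu> s \<le> NRmax \<rho> \<mu> t"
    unfolding NRmax_def[of _ _ s] by (intro cSUP_least) auto
qed

lemma NRmax_in_Linf:
  assumes "\<mu> \<in> Pc_star"
  shows "NRmax \<rho> \<mu> \<in> Linf \<rho>"
proof -
  obtain B where B: "\<And>t. cdf \<rho> t < 1 \<Longrightarrow> \<bar>NRmax \<rho> \<mu> t\<bar> \<le> B"
    using NRmax_bounded[OF assms] by blast
  have "AE t in \<rho>. \<bar>NRmax \<rho> \<mu> t\<bar> \<le> B"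
    using AE_cdf_less_1 by eventually_elim (rule B)
  moreover have "NRmax \<rho> \<mu> \<in> borel_measurable borel"
    using mono_on_NRmax[OF assms] NRmax_eq_if_cdf_eq_1 by (rule borel_measurable_mono_on_cdf_less_1)
  ultimately show ?thesis
    unfolding Linf_def measurable_cong_sets[OF events_eq_borel refl] by blast
qed

end

section \<open>Affine invariance of the max-normalized R-CDT\<close>

lemma homeomorphism_affine_matrix:
  fixes A :: "real^'n^'n"
  assumes "invertible A"
  obtains g where "homeomorphism UNIV UNIV (\<lambda>x. A *v x + y) g"
proof -
  obtain A' where A': "A ** A' = mat 1" "A' ** A = mat 1"
    using assms by (auto simp: invertible_def)
  have "homeomorphism UNIV UNIV (\<lambda>x. A *v x + y) (\<lambda>x. A' *v (x - y))"
  proof (rule homeomorphismI)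
    show "continuous_on UNIV (\<lambda>x. A *v x + y)"
      by (intro continuous_intros matrix_vector_mult_linear_continuous_on)
    show "continuous_on UNIV (\<lambda>x. A' *v (x - y))"
      by (rule continuous_on_compose2[OF matrix_vector_mult_linear_continuous_on[of UNIV A']])
        (auto intro: continuous_intros)
  qed (auto simp: matrix_vector_mul_assoc A' image_iff intro: exI[of _ "A' *v (_ - y)"])
  then show ?thesis by (rule that)
qed

lemma aff_dim_affine_matrix_image:
  fixes A :: "real^'n^'n"
  assumes "invertible A"
  shows "aff_dim ((\<lambda>x. A *v x + y) ` S) = aff_dim S"
proof -
  have "(\<lambda>x. A *v x + y) ` S = (+) y ` ((*v) A ` S)" by (auto simp: image_image add.commute)
  moreover have "inj ((*v) A)" using assms by (simp add: invertible_eq_bij bij_is_inj)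
  ultimately show ?thesis
    by (simp add: aff_dim_translation_eq aff_dim_injective_linear_image matrix_vector_mul_linear)
qed

lemma distr_affine_Pc_star:
  assumes "\<mu> \<in> Pc_star" "invertible A"
  shows "distr \<mu> borel (\<lambda>x. A *v x + y) \<in> Pc_star"
proof -
  interpret prob_space \<mu> using Pc_starD[OF assms(1)] by simp
  obtain g where hom: "homeomorphism UNIV UNIV (\<lambda>x. A *v x + y) g"
    using homeomorphism_affine_matrix[OF assms(2)] by blast
  have sets: "sets \<mu> = sets borel" using Pc_starD[OF assms(1)] by simp
  have "(\<lambda>x. A *v x + y) \<in> measurable \<mu> borel"
    unfolding measurable_cong_sets[OF sets refl]
    using homeomorphism_cont1[OF hom] by (rule borel_measurable_continuous_onI)
  then have "prob_space (distr \<mu> borel (\<lambda>x. A *v x + y))" by (rule prob_space_distr)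
  moreover have "compact ((\<lambda>x. A *v x + y) ` msupport \<mu>)"
    using continuous_on_subset[OF homeomorphism_cont1[OF hom]] Pc_starD(3)[OF assms(1)]
    by (intro compact_continuous_image) auto
  ultimately show ?thesis
    using Pc_starD(4)[OF assms(1)]
    by (simp add: Pc_star_def msupport_distr_homeomorphism[OF sets hom] aff_dim_affine_matrix_image[OF assms(2)])
qed

lemma affine_orbit_subset_Pc_star: "\<mu> \<in> Pc_star \<Longrightarrow> affine_orbit \<mu> \<subseteq> Pc_star"
  by (auto simp: affine_orbit_def intro: distr_affine_Pc_star)

lemma radon_distr_affine:
  fixes A :: "real^2^2"
  assumes "sets \<mu> = sets borel"
  shows "radon \<theta> (distr \<mu> borel (\<lambda>x. A *v x + y)) =
    distr (radon (sgn (transpose A *v \<theta>)) \<mu>) borel (\<lambda>s. norm (transpose A *v \<theta>) * s + y \<bullet> \<theta>)"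
proof -
  let ?w = "transpose A *v \<theta>"
  have "(\<lambda>x. A *v x + y) \<in> measurable \<mu> borel"
    unfolding measurable_cong_sets[OF assms refl]
    by (intro borel_measurable_continuous_onI continuous_intros matrix_vector_mult_linear_continuous_on)
  moreover have "(\<lambda>x. x \<bullet> sgn ?w) \<in> measurable \<mu> borel"
    unfolding measurable_cong_sets[OF assms refl] by simp
  moreover have "(A *v x + y) \<bullet> \<theta> = norm ?w * (x \<bullet> sgn ?w) + y \<bullet> \<theta>" for x
  proof -
    have "(A *v x) \<bullet> \<theta> = x \<bullet> ?w"
      by (metis dot_lmul_matrix inner_commute transpose_matrix_vector)
    then show ?thesis
      by (cases "?w = 0") (simp_all add: inner_add_left sgn_div_norm)
  qed
  ultimately show ?thesis
    unfolding radon_def by (simp add: distr_distr comp_def)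
qed

lemma sgn_transpose_image_sphere:
  fixes A :: "real^'n^'n"
  assumes "invertible A"
  shows "(\<lambda>\<theta>. sgn (transpose A *v \<theta>)) ` sphere 0 1 = sphere 0 1"
proof -
  obtain A' where A': "transpose A ** A' = mat 1" "A' ** transpose A = mat 1"
    using transpose_invertible[OF assms] by (auto simp: invertible_def)
  have nz: "transpose A *v \<theta> \<noteq> 0" if "\<theta> \<noteq> 0" for \<theta>
    using that A'(2) by (metis matrix_vector_mul_assoc matrix_vector_mul_lid matrix_vector_mult_0_right)
  have "\<psi> \<in> (\<lambda>\<theta>. sgn (transpose A *v \<theta>)) ` sphere 0 1" if "\<psi> \<in> sphere 0 1" for \<psi>
  proof
    have "A' *v \<psi> \<noteq> 0"
      using that A'(1) by (metis matrix_vector_mul_assoc matrix_vector_mul_lid matrix_vector_mult_0_right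
          norm_zero mem_sphere_0 zero_neq_one)
    then show "sgn (A' *v \<psi>) \<in> sphere 0 1" by (simp add: norm_sgn)
    have "transpose A *v sgn (A' *v \<psi>) = (1 / norm (A' *v \<psi>)) *\<^sub>R \<psi>"
      by (simp add: sgn_div_norm matrix_vector_mult_scaleR matrix_vector_mul_assoc A'(1) divide_inverse_commute)
    with \<open>A' *v \<psi> \<noteq> 0\<close> that show "\<psi> = sgn (transpose A *v sgn (A' *v \<psi>))"
      by (simp add: sgn_scaleR norm_sgn sgn_div_norm)
  qed
  moreover have "sgn (transpose A *v \<theta>) \<in> sphere 0 1" if "\<theta> \<in> sphere 0 1" for \<theta>
  proof -
    have "\<theta> \<noteq> 0" using that by auto
    then show ?thesis using nz[of \<theta>] by (simp add: norm_sgn)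
  qed
  ultimately show ?thesis by blast
qed

context atomless_real_distribution
begin

lemma NR_distr_affine:
  assumes "\<mu> \<in> Pc_star" "invertible A" "\<theta> \<in> sphere 0 1" "cdf \<rho> t < 1"
  shows "NR \<rho> \<theta> (distr \<mu> borel (\<lambda>x. A *v x + y)) t = NR \<rho> (sgn (transpose A *v \<theta>)) \<mu> t"
proof -
  let ?\<mu>' = "distr \<mu> borel (\<lambda>x. A *v x + y)"
  define w where "w = transpose A *v \<theta>"
  have "sgn w \<in> sphere 0 1"
    using sgn_transpose_image_sphere[OF assms(2)] assms(3) unfolding w_def by blast
  then have "0 < norm w" by (auto simp: sgn_zero_iff)
  obtain R where "\<And>\<theta>. \<theta> \<in> sphere 0 1 \<Longrightarrow> bounded_real_distribution (radon \<theta> \<mu>) (- R - 1) R"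
    using Pc_star_radon_bounded[OF assms(1)] by blast
  note \<nu> = this[OF \<open>sgn w \<in> sphere 0 1\<close>]
  obtain R' where "\<And>\<theta>. \<theta> \<in> sphere 0 1 \<Longrightarrow> bounded_real_distribution (radon \<theta> ?\<mu>') (- R' - 1) R'"
    using Pc_star_radon_bounded[OF distr_affine_Pc_star[OF assms(1,2)]] by blast
  note \<nu>' = this[OF assms(3)]
  have cdt_eq: "cdt \<rho> (radon \<theta> ?\<mu>') s = norm w * cdt \<rho> (radon (sgn w) \<mu>) s + y \<bullet> \<theta>"
    if "cdf \<rho> s < 1" for s
    using cdt_distr_affine[OF \<nu> that \<open>0 < norm w\<close>]
    by (simp add: radon_distr_affine[OF Pc_starD(2)[OF assms(1)]] w_def)
  have "AE s in \<rho>. cdt \<rho> (radon \<theta> ?\<mu>') s = norm w * cdt \<rho> (radon (sgn w) \<mu>) s + y \<bullet> \<theta>"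
    using AE_cdf_less_1 by eventually_elim (rule cdt_eq)
  then show ?thesis
    unfolding NR_def w_def[symmetric]
    using prob_space_axioms integrable_cdt[OF \<nu>] borel_measurable_cdt[OF \<nu>'] \<open>0 < norm w\<close> cdt_eq[OF assms(4)]
    by (intro normalized_affine_eq) (auto simp: measurable_cong_sets[OF events_eq_borel refl])
qed

lemma NRmax_distr_affine:
  assumes "\<mu> \<in> Pc_star" "invertible A" "cdf \<rho> t < 1"
  shows "NRmax \<rho> (distr \<mu> borel (\<lambda>x. A *v x + y)) t = NRmax \<rho> \<mu> t"
proof -
  have "NRmax \<rho> (distr \<mu> borel (\<lambda>x. A *v x + y)) t
      = (SUP \<theta>\<in>sphere 0 1. NR \<rho> (sgn (transpose A *v \<theta>)) \<mu> t)"
    unfolding NRmax_def using NR_distr_affine[OF assms(1,2) _ assms(3)] by simp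
  also have "\<dots> = (SUP \<psi>\<in>(\<lambda>\<theta>. sgn (transpose A *v \<theta>)) ` sphere 0 1. NR \<rho> \<psi> \<mu> t)"
    by (simp add: image_comp)
  also have "\<dots> = NRmax \<rho> \<mu> t"
    unfolding NRmax_def sgn_transpose_image_sphere[OF assms(2)] ..
  finally show ?thesis .
qed

lemma AE_NRmax_affine_orbit:
  assumes "\<mu> \<in> Pc_star" "\<mu>' \<in> affine_orbit \<mu>"
  shows "AE t in \<rho>. NRmax \<rho> \<mu>' t = NRmax \<rho> \<mu> t"
proof -
  obtain A y where \<mu>': "\<mu>' = distr \<mu> borel (\<lambda>x. A *v x + y)" and "invertible A"
    using assms(2) by (auto simp: affine_orbit_def)
  show ?thesis
    using AE_cdf_less_1 by eventually_elim (simp add: \<mu>' NRmax_distr_affine[OF assms(1) \<open>invertible A\<close>])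
qed

end

section \<open>Separation in \<open>L\<^sup>\<infinity>\<close>\<close>

lemma integrable_Linf_mult:
  assumes "finite_measure \<rho>" "h \<in> Linf \<rho>" "s \<in> borel_measurable \<rho>" "\<And>t. \<bar>s t\<bar> \<le> K"
  shows "integrable \<rho> (\<lambda>t. h t * s t)"
proof -
  obtain C where "AE t in \<rho>. \<bar>h t\<bar> \<le> C" "h \<in> borel_measurable \<rho>"
    using assms(2) by (auto simp: Linf_def)
  moreover have "\<bar>h t * s t\<bar> \<le> C * K" if "\<bar>h t\<bar> \<le> C" for t
    using mult_mono[OF that assms(4)[of t] order_trans[OF abs_ge_zero that] abs_ge_zero]
    by (simp add: abs_mult)
  ultimately show ?thesis
    using assms(3) by (intro finite_measure.integrable_const_bound[OF assms(1), of _ "C * K"])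
      (auto elim: AE_mp)
qed

lemma Linf_functional_integral_mult:
  assumes "prob_space \<rho>" "s \<in> borel_measurable \<rho>" "\<And>t. \<bar>s t\<bar> \<le> K"
  shows "Linf_functional \<rho> (\<lambda>h. \<integral>t. h t * s t \<partial>\<rho>)"
  unfolding Linf_functional_def
proof (intro conjI ballI allI impI)
  interpret prob_space \<rho> by fact
  note int = integrable_Linf_mult[OF finite_measure_axioms _ assms(2,3)]
  show "(\<integral>t. (h t + h' t) * s t \<partial>\<rho>) = (\<integral>t. h t * s t \<partial>\<rho>) + (\<integral>t. h' t * s t \<partial>\<rho>)"
    if "h \<in> Linf \<rho>" "h' \<in> Linf \<rho>" for h h'
    using int[OF that(1)] int[OF that(2)] by (simp add: distrib_right)
  show "(\<integral>t. c * h t * s t \<partial>\<rho>) = c * (\<integral>t. h t * s t \<partial>\<rho>)" for c h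
    by (simp add: mult.assoc)
  show "\<exists>M. \<forall>h\<in>Linf \<rho>. \<forall>B. (AE t in \<rho>. \<bar>h t\<bar> \<le> B) \<longrightarrow> \<bar>\<integral>t. h t * s t \<partial>\<rho>\<bar> \<le> M * B"
  proof (intro exI[of _ K] ballI allI impI)
    fix h B assume "h \<in> Linf \<rho>" and hB: "AE t in \<rho>. \<bar>h t\<bar> \<le> B"
    have "AE t in \<rho>. \<bar>h t * s t\<bar> \<le> K * B"
      using hB
    proof eventually_elim
      case (elim t)
      then show ?case
        using mult_mono[OF assms(3)[of t] elim abs_ge_zero[THEN order_trans, OF assms(3)] abs_ge_zero]
        by (simp add: abs_mult mult.commute)
    qed
    then have "(\<integral>t. \<bar>h t * s t\<bar> \<partial>\<rho>) \<le> K * B"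
      using int[OF \<open>h \<in> Linf \<rho>\<close>] by (intro integral_le_const) auto
    then show "\<bar>\<integral>t. h t * s t \<partial>\<rho>\<bar> \<le> K * B"
      using integral_abs_bound[of \<rho> "\<lambda>t. h t * s t"] by linarith
  qed
qed

lemma Linf_lin_separable_AE_classes:
  assumes "prob_space \<rho>" "f \<in> Linf \<rho>" "g \<in> Linf \<rho>" "\<not> (AE t in \<rho>. f t = g t)"
    and "A \<subseteq> Linf \<rho>" "\<And>a. a \<in> A \<Longrightarrow> AE t in \<rho>. a t = f t"
    and "B \<subseteq> Linf \<rho>" "\<And>b. b \<in> B \<Longrightarrow> AE t in \<rho>. b t = g t"
  shows "Linf_lin_separable \<rho> A B"
proof -
  interpret prob_space \<rho> by fact
  define s where "s t = sgn (f t - g t)" for t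
  define L where "L h = (\<integral>t. h t * s t \<partial>\<rho>)" for h
  have [measurable]: "f \<in> borel_measurable \<rho>" "g \<in> borel_measurable \<rho>"
    using assms(2,3) by (auto simp: Linf_def)
  have s_meas: "s \<in> borel_measurable \<rho>" unfolding s_def by measurable
  have s_bound: "\<bar>s t\<bar> \<le> 1" for t by (simp add: s_def sgn_real_def)
  note int = integrable_Linf_mult[OF finite_measure_axioms _ s_meas s_bound]
  have L_AE: "L h = L k" if "h \<in> Linf \<rho>" "k \<in> Linf \<rho>" "AE t in \<rho>. h t = k t" for h k
    unfolding L_def using int[OF that(1)] int[OF that(2)] that(3)
    by (intro integral_cong_AE) (auto elim: AE_mp)
  have diff: "f t * s t - g t * s t = \<bar>f t - g t\<bar>" for t
    by (simp add: s_def abs_sgn left_diff_distrib)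
  have "L f - L g = (\<integral>t. \<bar>f t - g t\<bar> \<partial>\<rho>)"
    unfolding L_def diff[symmetric] using int[OF assms(2)] int[OF assms(3)] by simp
  moreover have "integrable \<rho> (\<lambda>t. \<bar>f t - g t\<bar>)"
    unfolding diff[symmetric] using int[OF assms(2)] int[OF assms(3)] by simp
  then have "(\<integral>t. \<bar>f t - g t\<bar> \<partial>\<rho>) \<noteq> 0"
    using assms(4) by (simp add: integral_nonneg_eq_0_iff_AE)
  moreover have "0 \<le> (\<integral>t. \<bar>f t - g t\<bar> \<partial>\<rho>)" by (simp add: integral_nonneg_AE)
  ultimately have "L g < L f" by linarith
  moreover have "L a = L f" if "a \<in> A" for a
    using assms(2,5,6) that by (intro L_AE) auto
  moreover have "L b = L g" if "b \<in> B" for b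
    using assms(3,7,8) that by (intro L_AE) auto
  moreover have "Linf_functional \<rho> L"
    unfolding L_def using assms(1) s_meas s_bound by (rule Linf_functional_integral_mult)
  ultimately show ?thesis
    unfolding Linf_lin_separable_def using assms(5,7)
    by (intro conjI exI[of _ L] exI[of _ "(L f + L g) / 2"]) auto
qed

theorem theorem9:
  fixes \<rho> :: "real measure" and \<mu>0 \<nu>0 :: "(real^2) measure"
  assumes "prob_space \<rho>" and "sets \<rho> = sets borel"
    and "\<forall>t. emeasure \<rho> {t} = 0"
    and "\<mu>0 \<in> Pc_star" and "\<nu>0 \<in> Pc_star"
    and "\<not> (AE t in \<rho>. NRmax \<rho> \<mu>0 t = NRmax \<rho> \<nu>0 t)"
  shows "affine_orbit \<mu>0 \<subseteq> Pc_star \<and> affine_orbit \<nu>0 \<subseteq> Pc_star \<and>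
         Linf_lin_separable \<rho> (NRmax \<rho> ` affine_orbit \<mu>0) (NRmax \<rho> ` affine_orbit \<nu>0)"
proof -
  interpret atomless_real_distribution \<rho>
    using assms(1-3) unfolding atomless_real_distribution_def atomless_real_distribution_axioms_def
      real_distribution_def real_distribution_axioms_def by (simp add: measure_def)
  have orbits: "affine_orbit \<mu>0 \<subseteq> Pc_star" "affine_orbit \<nu>0 \<subseteq> Pc_star"
    using affine_orbit_subset_Pc_star assms(4,5) by auto
  then have "Linf_lin_separable \<rho> (NRmax \<rho> ` affine_orbit \<mu>0) (NRmax \<rho> ` affine_orbit \<nu>0)"
    using assms(1,4-6)
    by (intro Linf_lin_separable_AE_classes[where f = "NRmax \<rho> \<mu>0" and g = "NRmax \<rho> \<nu>0"])
      (auto intro: NRmax_in_Linf AE_NRmax_affine_orbit)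
  with orbits show ?thesis by blast
qed

end
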